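(* Let $N, M, K$ be positive integers, let $\mathbf{a} \in \mathbb{C}^{N}$ and $\mathbf{B} \in \mathbb{C}^{N \times M}$ be constants, and write $\mathbf{A} = \mathrm{diag}(\mathbf{a})$. For a diagonal matrix $\mathbf{X} \in \mathbb{C}^{N \times N}$ write $\mathbf{x} = \mathrm{diag}(\mathbf{X}) \in \mathbb{C}^N$ for its vector of diagonal entries. Fix a diagonal matrix $\mathbf{X}_0 \in \mathbb{C}^{N\times N}$ with $\mathbf{x}_0 = \mathrm{diag}(\mathbf{X}_0)$ and a matrix $\mathbf{Y}_0 \in \mathbb{C}^{M \times K}$. Define, for diagonal $\mathbf{X} \in \mathbb{C}^{N\times N}$ and $\mathbf{Y} \in \mathbb{C}^{M \times K}$, \[ \begin{aligned} \Omega_{\mathbf{a},\mathbf{B}}(\mathbf{X},\mathbf{X}_0,\mathbf{Y},\mathbf{Y}_0) \triangleq\ & \Re\Big\{ \big(\mathbf{Y}_0\mathbf{Y}_0^{\mathsf H}\mathbf{B}^{\mathsf H}\mathbf{A}^*\mathbf{x}_0^* + \mathbf{B}^{\mathsf H}\mathbf{A}^*\mathbf{x}_0^*\big)^{\mathsf H}\big(\mathbf{Y}\mathbf{Y}_0^{\mathsf H}\mathbf{B}^{\mathsf H}\mathbf{A}^*\mathbf{x}_0^* + \mathbf{B}^{\mathsf H}\mathbf{A}^*\mathbf{x}^*\big)\Big\} \\ & - \tfrac{1}{2}\big\|\mathbf{Y}\mathbf{Y}_0^{\mathsf H}\mathbf{B}^{\mathsf H}\mathbf{A}^*\mathbf{x}_0^*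 - \mathbf{B}^{\mathsf H}\mathbf{A}^*\mathbf{x}^*\big\|_2^2 - \big\|\mathbf{Y}_0^{\mathsf H}\mathbf{B}^{\mathsf H}\mathbf{A}^*\mathbf{x}_0^*\big\|_2^2 \\ & - \tfrac{1}{2}\big\|\mathbf{Y}_0\mathbf{Y}_0^{\mathsf H}\mathbf{B}^{\mathsf H}\mathbf{A}^*\mathbf{x}_0^* + \mathbf{B}^{\mathsf H}\mathbf{A}^*\mathbf{x}_0^*\big\|_2^2 . \end{aligned} \] Then $\Omega_{\mathbf{a},\mathbf{B}}(\cdot,\mathbf{X}_0,\cdot,\mathbf{Y}_0)$ is jointly concave in $(\mathbf{X},\mathbf{Y})$ (viewed as a real-valued function of the real and imaginary parts of the entries of $\mathbf{x}$ and $\mathbf{Y}$), and for every diagonal $\mathbf{X} \in \mathbb{C}^{N\times N}$ and every $\mathbf{Y} \in \mathbb{C}^{M\times K}$, \[ \|\mathbf{a}^{\mathsf T}\mathbf{X}\mathbf{B}\mathbf{Y}\|_2^2 \ \ge\ \Omega_{\mathbf{a},\mathbf{B}}(\mathbf{X},\mathbf{X}_0,\mathbf{Y},\mathbf{Y}_0). \]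
   Context: $(\cdot)^*$ denotes entrywise complex conjugation, $(\cdot)^{\mathsf T}$ transpose, $(\cdot)^{\mathsf H}$ conjugate transpose, $\|\cdot\|_2$ the Euclidean norm, $\Re\{\cdot\}$ the real part. For a vector $\mathbf{v}$, $\mathrm{diag}(\mathbf{v})$ is the diagonal matrix with $\mathbf{v}$ on its diagonal; for a diagonal matrix, $\mathrm{diag}(\cdot)$ is the vector of its diagonal entries. (In the paper this bound is written compactly via $\boldsymbol{\alpha}_{\mathbf{a},\mathbf{B}}(\mathbf{Z}_1,\mathbf{Z}_2,\mathbf{Z}_3,\mathbf{Z}_4) = \mathbf{Z}_3\mathbf{Z}_4^{\mathsf H}\mathbf{B}^{\mathsf H}\mathrm{diag}(\mathbf{a}^* )\mathrm{diag}(\mathbf{Z}_2^* ) + \mathbf{B}^{\mathsf H}\mathrm{diag}(\mathbf{a}^* )\mathrm{diag}(\mathbf{Z}_1^* )$ as $\Re\{\boldsymbol{\alpha}^{\mathsf H}(\mathbf{X}_0,\mathbf{X}_0,\mathbf{Y}_0,\mathbf{Y}_0)\boldsymbol{\alpha}(\mathbf{X},\mathbf{X}_0,\mathbf{Y},\mathbf{Y}_0)\} - \tfrac12\|\boldsymbol{\alpha}(-\mathbf{X},\mathbf{X}_0,\mathbf{Y},\mathbf{Y}_0)\|_2^2 - \|\boldsymbol{\alpha}(\mathbf{0},\mathbf{X}_0,\mathbf{I},\mathbf{Y}_0)\|_2^2 - \tfrac12\|\boldsymbol{\alpha}(\mathbf{X}_0,\mathbf{X}_0,\mathbf{Y}_0,\mathbf{Y}_0)\|_2^2$,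 which equals the expression above.) *)

theory Defs
  imports "HOL-Analysis.Analysis"
begin

text \<open>Vectors in C^n are complex^'n; an N x M matrix is complex^'m^'n (row index 'n).
  The Euclidean norm of complex^'n is the library norm.\<close>

definition vconj :: "complex^'n \<Rightarrow> complex^'n" where
  "vconj v = (\<chi> i. cnj (v$i))"

definition mconj :: "complex^'m^'n \<Rightarrow> complex^'m^'n" where
  "mconj A = (\<chi> i j. cnj (A$i$j))"

definition hconj :: "complex^'m^'n \<Rightarrow> complex^'n^'m" where
  "hconj A = (\<chi> i j. cnj (A$j$i))"

definition diag_mat :: "complex^'n \<Rightarrow> complex^'n^'n" where
  "diag_mat v = (\<chi> i j. if i = j then v$i else 0)"

definition diag_vec :: "complex^'n^'n \<Rightarrow> complex^'n" where
  "diag_vec X = (\<chi> i. X$i$i)"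

definition is_diag :: "complex^'n^'n \<Rightarrow> bool" where
  "is_diag X \<longleftrightarrow> (\<forall>i j. i \<noteq> j \<longrightarrow> X$i$j = 0)"

definition hdot :: "complex^'n \<Rightarrow> complex^'n \<Rightarrow> complex" where
  "hdot v w = (\<Sum>i\<in>UNIV. cnj (v$i) * w$i)"

definition Omega ::
  "complex^'n \<Rightarrow> complex^'m^'n \<Rightarrow> complex^'n^'n \<Rightarrow> complex^'n^'n
     \<Rightarrow> complex^'k^'m \<Rightarrow> complex^'k^'m \<Rightarrow> real" where
  "Omega a B X X0 Y Y0 =
    (let A = diag_mat a; x = diag_vec X; x0 = diag_vec X0;
         c0 = ((hconj B ** mconj A) *v vconj x0);
         c = ((hconj B ** mconj A) *v vconj x);
         u = ((Y0 ** hconj Y0) *v c0) + c0;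
         w = ((Y ** hconj Y0) *v c0) + c
     in Re (hdot u w)
        - 1/2 * (norm (((Y ** hconj Y0) *v c0) - c))^2
        - (norm (hconj Y0 *v c0))^2
        - 1/2 * (norm u)^2)"

end

theory Submission
  imports Defs
begin

text \<open>Write \<open>c = B\<^sup>H A\<^sup>* x\<^sup>*\<close>, so that \<open>\<parallel>a\<^sup>T X B Y\<parallel> = \<parallel>Y\<^sup>H c\<parallel>\<close>, and let \<open>v = Y\<^sub>0\<^sup>H c\<^sub>0\<close>, where
  \<open>c\<^sub>0\<close> is \<open>c\<close> at \<open>x\<^sub>0\<close>. Two tangent estimates and a polarization give the
  bound: \<open>\<parallel>z\<parallel>\<^sup>2 \<ge> 2 Re\<langle>v, z\<rangle> - \<parallel>v\<parallel>\<^sup>2\<close> for \<open>z = Y\<^sup>H c\<close>; the cross term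
  \<open>Re\<langle>v, Y\<^sup>H c\<rangle> = Re\<langle>Y v, c\<rangle>\<close> equals \<open>(\<parallel>Y v + c\<parallel>\<^sup>2 - \<parallel>Y v - c\<parallel>\<^sup>2)/4\<close>; and
  \<open>\<parallel>w\<parallel>\<^sup>2/2 \<ge> Re\<langle>u, w\<rangle> - \<parallel>u\<parallel>\<^sup>2/2\<close> for \<open>w = Y v + c\<close>. What remains, \<open>\<Omega>\<close>, is a
  real-linear function of \<open>(x, Y)\<close> minus half the squared norm of another real-linear one, hence
  concave.\<close>

lemma convex_on_power2_norm: "convex_on UNIV (\<lambda>x::'a::real_inner. norm x ^ 2)"
proof (rule convex_onI)
  fix t :: real and x y :: 'a
  have "(1 - t) * norm x ^ 2 + t * norm y ^ 2 - norm ((1 - t) *\<^sub>R x + t *\<^sub>R y) ^ 2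
      = (1 - t) * t * norm (x - y) ^ 2"
    by (simp add: power2_norm_eq_inner inner_add inner_diff inner_commute algebra_simps)
  moreover assume "0 < t" "t < 1"
  ultimately show "norm ((1 - t) *\<^sub>R x + t *\<^sub>R y) ^ 2 \<le> (1 - t) * norm x ^ 2 + t * norm y ^ 2"
    by (smt (verit) mult_nonneg_nonneg zero_le_power2)
qed simp

lemma convex_on_compose_linear:
  assumes "linear f" and "convex_on UNIV g"
  shows "convex_on UNIV (\<lambda>x. g (f x))"
  using assms by (simp add: convex_on_def linear_add linear_scale)

lemma concave_on_linear:
  fixes f :: "'a::real_vector \<Rightarrow> real"
  assumes "linear f"
  shows "concave_on UNIV f"
  using assms by (simp add: concave_on_iff linear_add linear_scale)

lemma concave_on_inner_minus_half_power2_norm: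
  fixes W :: "'a::real_vector \<Rightarrow> 'b::real_inner" and D :: "'a \<Rightarrow> 'c::real_inner"
  assumes "linear W" and "linear D"
  shows "concave_on UNIV (\<lambda>p. inner w (W p) - 1/2 * norm (D p) ^ 2 - K)"
proof (intro concave_on_diff)
  show "concave_on UNIV (\<lambda>p. inner w (W p))"
    using assms(1) bounded_linear_inner_right[of w]
    by (intro concave_on_linear) (auto dest: bounded_linear.linear linear_compose simp: o_def)
  show "convex_on UNIV (\<lambda>p. 1/2 * norm (D p) ^ 2)"
    using convex_on_compose_linear[OF assms(2) convex_on_power2_norm] by auto
qed (simp add: convex_on_const)

lemma inner_le_half_power2_norm:
  fixes u w :: "'a::real_inner"
  shows "inner u w \<le> 1/2 * norm u ^ 2 + 1/2 * norm w ^ 2"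
  using inner_ge_zero[of "u - w"]
  by (simp add: power2_norm_eq_inner inner_diff inner_commute)

lemma power2_norm_ge_tangent:
  fixes z z0 :: "'a::real_inner"
  shows "2 * inner z0 z - norm z0 ^ 2 \<le> norm z ^ 2"
  using inner_ge_zero[of "z - z0"]
  by (simp add: power2_norm_eq_inner inner_diff inner_commute)

lemma power2_norm_add_minus_power2_norm_diff:
  fixes x y :: "'a::real_inner"
  shows "norm (x + y) ^ 2 - norm (x - y) ^ 2 = 4 * inner x y"
  by (simp add: power2_norm_eq_inner inner_add inner_diff inner_commute)

lemma inner_vec_complex_eq_Re_hdot: "inner (v::complex^'n) w = Re (hdot v w)"
  by (simp add: inner_vec_def hdot_def inner_complex_def Re_sum)

lemma hdot_hconj_mult_left: "hdot (hconj Y *v v) w = hdot v (Y *v w)"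
  by (simp add: hdot_def hconj_def matrix_vector_mult_def sum_distrib_left sum_distrib_right
      mult_ac) (rule sum.swap)

lemma inner_hconj_mult_left: "inner (hconj Y *v v) w = inner v (Y *v w)"
  by (simp add: inner_vec_complex_eq_Re_hdot hdot_hconj_mult_left)

lemma linear_vconj: "linear vconj"
  by (rule linearI) (simp_all add: vec_eq_iff vconj_def)

lemma linear_matrix_vector_mult_left: "linear (\<lambda>Y::complex^'m^'n. Y *v v)"
  by (rule linearI) (simp_all add: vec_eq_iff matrix_vector_mult_def sum.distrib scaleR_sum_right
      algebra_simps)

lemma norm_vconj [simp]: "norm (vconj v) = norm v"
  by (simp add: norm_vec_def vconj_def)

lemma diag_vec_diag_mat [simp]: "diag_vec (diag_mat x) = x"
  by (simp add: vec_eq_iff diag_vec_def diag_mat_def)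

lemma diag_mat_diag_vec: "is_diag X \<Longrightarrow> diag_mat (diag_vec X) = X"
  by (auto simp: vec_eq_iff is_diag_def diag_mat_def diag_vec_def)

lemma diag_mat_matrix_mult: "diag_mat x ** B = (\<chi> i j. x$i * B$i$j)"
  by (simp add: vec_eq_iff matrix_matrix_mult_def diag_mat_def if_distrib [of "\<lambda>z. z * _"]
      cong: if_cong)

lemma matrix_mult_diag_mat: "B ** diag_mat x = (\<chi> i j. B$i$j * x$j)"
  by (simp add: vec_eq_iff matrix_matrix_mult_def diag_mat_def if_distrib [of "\<lambda>z. _ * z"]
      cong: if_cong)

lemma mconj_diag_mat: "mconj (diag_mat a) = diag_mat (vconj a)"
  by (simp add: vec_eq_iff mconj_def diag_mat_def vconj_def)

lemma vconj_vector_diag_matrix_mult: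
  "vconj (a v* (diag_mat x ** B ** Y)) = hconj Y *v ((hconj B ** mconj (diag_mat a)) *v vconj x)"
  unfolding mconj_diag_mat diag_mat_matrix_mult matrix_mult_diag_mat
  by (simp add: vec_eq_iff vconj_def
      vector_matrix_mult_def matrix_vector_mult_def matrix_matrix_mult_def hconj_def
      sum_distrib_left sum_distrib_right mult_ac) (intro allI sum.swap)

lemma linear_mult_vec_plus_minus_mult_vconj:
  fixes M :: "complex^'n^'m" and v :: "complex^'k"
  shows "linear (\<lambda>(x, Y::complex^'k^'m). Y *v v + M *v vconj x)"
    and "linear (\<lambda>(x, Y::complex^'k^'m). Y *v v - M *v vconj x)"
proof -
  have Y: "linear (\<lambda>p::(complex^'n) \<times> (complex^'k^'m). snd p *v v)"
    using linear_compose [OF linear_snd linear_matrix_vector_mult_left] by (simp add: o_def)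
  have x: "linear (\<lambda>p::(complex^'n) \<times> (complex^'k^'m). M *v vconj (fst p))"
    using linear_compose [OF linear_compose [OF linear_fst linear_vconj] matrix_vector_mul_linear]
    by (simp add: o_def)
  show "linear (\<lambda>(x, Y::complex^'k^'m). Y *v v + M *v vconj x)"
    using linear_compose_add [OF Y x] by (simp add: case_prod_unfold)
  show "linear (\<lambda>(x, Y::complex^'k^'m). Y *v v - M *v vconj x)"
    using linear_compose_sub [OF Y x] by (simp add: case_prod_unfold)
qed

lemma quadratic_minorant_le_power2_norm_hconj_mult:
  fixes Y :: "complex^'k^'m"
  shows "inner u (Y *v v + c) - 1/2 * norm (Y *v v - c) ^ 2 - norm v ^ 2 - 1/2 * norm u ^ 2
    \<le> norm (hconj Y *v c) ^ 2"
proof -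
  have "inner u (Y *v v + c) - 1/2 * norm u ^ 2 \<le> 1/2 * norm (Y *v v + c) ^ 2"
    using inner_le_half_power2_norm[of u "Y *v v + c"] by simp
  moreover have "1/2 * norm (Y *v v + c) ^ 2 - 1/2 * norm (Y *v v - c) ^ 2 = 2 * inner (Y *v v) c"
    using power2_norm_add_minus_power2_norm_diff[of "Y *v v" c] by simp
  moreover have "inner (Y *v v) c = inner v (hconj Y *v c)"
    by (metis inner_commute inner_hconj_mult_left)
  moreover have "2 * inner v (hconj Y *v c) - norm v ^ 2 \<le> norm (hconj Y *v c) ^ 2"
    by (rule power2_norm_ge_tangent)
  ultimately show ?thesis
    by linarith
qed

theorem lemma1:
  fixes a :: "complex^'n" and B :: "complex^'m^'n"
    and X0 :: "complex^'n^'n" and Y0 :: "complex^'k^'m"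
  assumes "is_diag X0"
  shows "concave_on UNIV (\<lambda>(x :: complex^'n, Y :: complex^'k^'m). Omega a B (diag_mat x) X0 Y Y0)
         \<and> (\<forall>(X :: complex^'n^'n) (Y :: complex^'k^'m). is_diag X \<longrightarrow>
               (norm (a v* (X ** B ** Y)))^2 \<ge> Omega a B X X0 Y Y0)"
proof
  define M where "M = hconj B ** mconj (diag_mat a)"
  define c0 where "c0 = M *v vconj (diag_vec X0)"
  define v where "v = hconj Y0 *v c0"
  define u where "u = Y0 *v v + c0"
  have Omega_eq: "Omega a B X X0 Y Y0 = inner u (Y *v v + M *v vconj (diag_vec X))
      - 1/2 * norm (Y *v v - M *v vconj (diag_vec X)) ^ 2 - (norm v ^ 2 + 1/2 * norm u ^ 2)" for X Y
    unfolding Omega_def Let_def M_def [symmetric] c0_def [symmetric]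
    by (simp add: v_def u_def inner_vec_complex_eq_Re_hdot matrix_vector_mul_assoc)
  have "linear (\<lambda>(x, Y). Y *v v + M *v vconj x)" "linear (\<lambda>(x, Y). Y *v v - M *v vconj x)"
    by (fact linear_mult_vec_plus_minus_mult_vconj)+
  then show "concave_on UNIV (\<lambda>(x, Y). Omega a B (diag_mat x) X0 Y Y0)"
    unfolding Omega_eq diag_vec_diag_mat case_prod_unfold
    by (rule concave_on_inner_minus_half_power2_norm)
  show "\<forall>X Y. is_diag X \<longrightarrow> (norm (a v* (X ** B ** Y)))^2 \<ge> Omega a B X X0 Y Y0"
  proof (intro allI impI)
    fix X :: "complex^'n^'n" and Y :: "complex^'k^'m"
    assume "is_diag X"
    then have "norm (a v* (X ** B ** Y)) = norm (hconj Y *v (M *v vconj (diag_vec X)))"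
      using vconj_vector_diag_matrix_mult[of a "diag_vec X" B Y]
      by (metis M_def diag_mat_diag_vec norm_vconj)
    then show "(norm (a v* (X ** B ** Y)))^2 \<ge> Omega a B X X0 Y Y0"
      using quadratic_minorant_le_power2_norm_hconj_mult [of u Y v "M *v vconj (diag_vec X)"]
      by (simp add: Omega_eq)
  qed
qed

end
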